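(* $18,19\notin\operatorname{Spec}(32_{65})$.
   Context: $32_{65}$ is the finite integral symmetric relation algebra with atoms $1'$, $a$, $b$, $c$, all symmetric, in which a diversity cycle $xyz$ (with $x,y,z\in\{a,b,c\}$) is mandatory (i.e. $x;y\ge z$) if it involves $a$ and forbidden (i.e. $x;y\cdot z=0$) otherwise. A representation over a set $U$ is an embedding into the full relation algebra on $U\times U$. $\operatorname{Spec}(A)$ is the set of cardinals $\alpha\le\omega$ such that $A$ has a representation over a set of cardinality $\alpha$. *)

theory Defs
  imports Main
begin

text \<open>Elements are
  sets of atoms; Boolean operations are the set operations; converse is the identity
  (all atoms symmetric); composition is the union of the atom compositions.\<close>

datatype atom = One | Aa | Bb | Cc

definition diversity :: "atom set" where
  "diversity = {Aa, Bb, Cc}"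

text \<open>Composition of atoms: a diversity cycle xyz is mandatory iff it involves a,
  forbidden otherwise; x;x contains 1' for diversity x (symmetric atoms).\<close>
definition atom_comp :: "atom \<Rightarrow> atom \<Rightarrow> atom set" where
  "atom_comp x y =
     (if x = One then {y}
      else if y = One then {x}
      else (if x = y then {One} else {}) \<union> {z \<in> diversity. Aa \<in> {x, y, z}})"

definition ra_comp :: "atom set \<Rightarrow> atom set \<Rightarrow> atom set" where
  "ra_comp X Y = (\<Union>x\<in>X. \<Union>y\<in>Y. atom_comp x y)"

definition ra_conv :: "atom set \<Rightarrow> atom set" where
  "ra_conv X = X"

definition representation :: "'u set \<Rightarrow> (atom set \<Rightarrow> ('u \<times> 'u) set) \<Rightarrow> bool" where
  "representation U f \<longleftrightarrow>
     inj f \<and>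
     (\<forall>X Y. f (X \<union> Y) = f X \<union> f Y) \<and>
     (\<forall>X. f (- X) = (U \<times> U) - f X) \<and>
     f {One} = Id_on U \<and>
     (\<forall>X. f (ra_conv X) = converse (f X)) \<and>
     (\<forall>X Y. f (ra_comp X Y) = f X O f Y)"

end

theory Submission
  imports Defs
begin

text \<open>In a representation the atoms b and c are disjoint symmetric relations whose union E
  is a triangle-free graph on U (no cycle built from b and c alone is allowed), and a holds
  exactly between distinct non-adjacent points.  The mandatory cycles a \<le> x;y for
  x, y \<in> {b, c} give every non-adjacent pair four common neighbours, told apart by the
  colours of their two edges, and 0' \<le> a;b lets one step from any point to a non-neighbour
  adjacent to any other prescribed point.  Two such steps produce non-neighbours q, w of x
  with w adjacent to q; the common neighbourhoods of x with q and with w are then disjoint,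
  so every point has degree at least 8.  For an edge xz, a neighbour y \<noteq> z of x and a
  non-neighbour w of y adjacent to z, the sets N(x), N(z) and N(y) \<inter> N(w) are pairwise
  disjoint, whence |U| \<ge> 8 + 8 + 4.\<close>

lemma ra_comp_bc_bc: "ra_comp {Bb, Cc} {Bb, Cc} = {One, Aa}"
  by (auto simp: ra_comp_def atom_comp_def diversity_def)

lemma a_in_ra_comp_bc:
  assumes "p \<in> {Bb, Cc}" "q \<in> {Bb, Cc}"
  shows "Aa \<in> ra_comp {p} {q}"
  using assms by (auto simp: ra_comp_def atom_comp_def diversity_def)

lemma diversity_subset_ra_comp_a_b: "diversity \<subseteq> ra_comp {Aa} {Bb}"
  by (auto simp: ra_comp_def atom_comp_def diversity_def)

context
  fixes U :: "'u set" and f :: "atom set \<Rightarrow> ('u \<times> 'u) set"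
  assumes rep: "representation U f"
begin

lemma representation_union: "f (X \<union> Y) = f X \<union> f Y"
  using rep unfolding representation_def by blast

lemma representation_compl: "f (- X) = U \<times> U - f X"
  using rep unfolding representation_def by blast

lemma representation_comp: "f (ra_comp X Y) = f X O f Y"
  using rep unfolding representation_def by blast

lemma representation_converse: "converse (f X) = f X"
  using rep unfolding representation_def ra_conv_def by metis

lemma representation_mono:
  assumes "X \<subseteq> Y"
  shows "f X \<subseteq> f Y"
  using representation_union[of X Y] assms by (metis Un_absorb1 Un_upper1)

lemma representation_identity: "f {One} = Id_on U"
  using rep unfolding representation_def by blast

lemma representation_UNIV: "f UNIV = U \<times> U"
proof -
  have "f UNIV = f {One} \<union> f (- {One})"
    using representation_union by (metis Compl_partition)
  also have "\<dots> = Id_on U \<union> (U \<times> U - Id_on U)"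
    unfolding representation_identity representation_compl ..
  also have "\<dots> = U \<times> U"
    using Id_on_subset_Times by blast
  finally show ?thesis .
qed

lemma representation_subset: "f X \<subseteq> U \<times> U"
  using representation_mono[of X UNIV] representation_UNIV by simp

lemma representation_empty: "f {} = {}"
  using representation_compl[of UNIV] representation_UNIV by simp

lemma representation_disjoint:
  assumes "X \<inter> Y = {}"
  shows "f X \<inter> f Y = {}"
  using representation_mono[of Y "- X"] assms representation_compl by blast

lemma representation_nonempty:
  assumes "X \<noteq> {}"
  shows "f X \<noteq> {}"
  using rep assms representation_empty unfolding representation_def inj_def by metis

lemma representation_diversity: "f diversity = U \<times> U - Id_on U"
proof -
  have "diversity = - {One}"
    using atom.exhaust by (auto simp: diversity_def)
  then show ?thesis
    using representation_compl representation_identity by metis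
qed

lemma representation_mandatory:
  assumes "z \<in> ra_comp X Y" "(u, v) \<in> f {z}"
  shows "\<exists>w. (u, w) \<in> f X \<and> (w, v) \<in> f Y"
  using representation_mono[of "{z}" "ra_comp X Y"] assms representation_comp by blast

lemma representation_bc: "f {Bb, Cc} = f {Bb} \<union> f {Cc}"
  using representation_union[of "{Bb}" "{Cc}"] insert_is_Un by metis

lemma representation_bc_triangle_free:
  assumes "(u, v) \<in> f {Bb, Cc}" "(v, w) \<in> f {Bb, Cc}"
  shows "(u, w) \<notin> f {Bb, Cc}"
proof -
  have "(u, w) \<in> f {One, Aa}"
    using assms representation_comp[of "{Bb, Cc}" "{Bb, Cc}"] ra_comp_bc_bc by auto
  then show ?thesis
    using representation_disjoint[of "{One, Aa}" "{Bb, Cc}"] by auto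
qed

lemma representation_non_edge:
  assumes "u \<in> U" "v \<in> U" "u \<noteq> v" "(u, v) \<notin> f {Bb, Cc}"
  shows "(u, v) \<in> f {Aa}"
proof -
  have "diversity = {Aa} \<union> {Bb, Cc}"
    by (auto simp: diversity_def)
  then have "f diversity = f {Aa} \<union> f {Bb, Cc}"
    using representation_union by metis
  then show ?thesis
    using assms representation_diversity by blast
qed

lemma representation_common_neighbours:
  assumes "finite U" and uv: "(u, v) \<in> f {Aa}"
  shows "4 \<le> card (f {Bb, Cc} `` {u} \<inter> f {Bb, Cc} `` {v})"
proof -
  let ?N = "\<lambda>x. f {Bb, Cc} `` {x}"
  have "\<exists>w. (u, w) \<in> f {p} \<and> (w, v) \<in> f {q}" if "p \<in> {Bb, Cc}" "q \<in> {Bb, Cc}" for p q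
    using representation_mandatory[OF a_in_ra_comp_bc[OF that] uv] .
  then obtain w1 w2 w3 w4 where
      w: "(u, w1) \<in> f {Bb}" "(w1, v) \<in> f {Bb}" "(u, w2) \<in> f {Bb}" "(w2, v) \<in> f {Cc}"
         "(u, w3) \<in> f {Cc}" "(w3, v) \<in> f {Bb}" "(u, w4) \<in> f {Cc}" "(w4, v) \<in> f {Cc}"
    by (metis insertI1 insertI2)
  have "f {Bb} \<inter> f {Cc} = {}"
    using representation_disjoint by simp
  then have "distinct [w1, w2, w3, w4]"
    using w by auto
  then have "card {w1, w2, w3, w4} = 4"
    using distinct_card[of "[w1, w2, w3, w4]"] by simp
  moreover have "{w1, w2, w3, w4} \<subseteq> ?N u \<inter> ?N v"
    using w representation_bc representation_converse[of "{Bb, Cc}"] by blast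
  moreover have "finite (?N u \<inter> ?N v)"
    using \<open>finite U\<close> representation_subset[of "{Bb, Cc}"]
    by (metis Image_subset finite_Int finite_subset)
  ultimately show ?thesis
    by (metis card_mono)
qed

lemma representation_escape:
  assumes "x \<in> U" "y \<in> U" "x \<noteq> y"
  shows "\<exists>w\<in>U. w \<noteq> x \<and> (x, w) \<notin> f {Bb, Cc} \<and> (w, y) \<in> f {Bb, Cc}"
proof -
  have "(x, y) \<in> f (ra_comp {Aa} {Bb})"
    using assms representation_mono[OF diversity_subset_ra_comp_a_b]
      representation_diversity by blast
  then obtain w where w: "(x, w) \<in> f {Aa}" "(w, y) \<in> f {Bb}"
    using representation_comp by blast
  have "f {Aa} \<subseteq> f diversity"
    by (rule representation_mono) (simp add: diversity_def)
  then have "w \<in> U" "w \<noteq> x"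
    using w(1) representation_diversity by auto
  moreover have "(x, w) \<notin> f {Bb, Cc}"
    using w(1) representation_disjoint[of "{Aa}" "{Bb, Cc}"] by auto
  moreover have "(w, y) \<in> f {Bb, Cc}"
    using w(2) representation_bc by blast
  ultimately show ?thesis by auto
qed

end

locale triangle_free_graph =
  fixes V :: "'v set" and E :: "'v rel"
  assumes finite_V: "finite V"
    and E_subset: "E \<subseteq> V \<times> V"
    and sym_E: "sym E"
    and triangle_free: "(u, v) \<in> E \<Longrightarrow> (v, w) \<in> E \<Longrightarrow> (u, w) \<notin> E"
begin

abbreviation nbhd :: "'v \<Rightarrow> 'v set" where
  "nbhd x \<equiv> E `` {x}"

lemma irrefl_E: "(u, u) \<notin> E"
  using triangle_free by blast

lemma nbhd_subset: "nbhd x \<subseteq> V"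
  using E_subset by blast

lemma finite_nbhd: "finite (nbhd x)"
  using finite_subset[OF nbhd_subset finite_V] .

lemma nbhds_disjoint_if_edge:
  assumes "(u, v) \<in> E"
  shows "nbhd u \<inter> nbhd v = {}"
  using assms triangle_free sym_E unfolding sym_def by blast

end

locale rich_triangle_free_graph = triangle_free_graph +
  assumes common_neighbours:
      "u \<in> V \<Longrightarrow> v \<in> V \<Longrightarrow> u \<noteq> v \<Longrightarrow> (u, v) \<notin> E \<Longrightarrow> 4 \<le> card (nbhd u \<inter> nbhd v)"
    and escape:
      "x \<in> V \<Longrightarrow> y \<in> V \<Longrightarrow> x \<noteq> y \<Longrightarrow> \<exists>w\<in>V. w \<noteq> x \<and> (x, w) \<notin> E \<and> (w, y) \<in> E"
begin

lemma degree_ge_8: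
  assumes x: "x \<in> V" and "y \<in> V" "x \<noteq> y"
  shows "8 \<le> card (nbhd x)"
proof -
  obtain q where q: "q \<in> V" "q \<noteq> x" "(x, q) \<notin> E"
    using escape[OF assms] by blast
  obtain w where w: "w \<in> V" "w \<noteq> x" "(x, w) \<notin> E" "(w, q) \<in> E"
    using escape[OF x q(1)] q(2) by metis
  have "4 \<le> card (nbhd x \<inter> nbhd q)" "4 \<le> card (nbhd x \<inter> nbhd w)"
    using common_neighbours x q w by metis+
  moreover have "card (nbhd x \<inter> nbhd q) + card (nbhd x \<inter> nbhd w) \<le> card (nbhd x)"
  proof -
    have "(nbhd x \<inter> nbhd q) \<inter> (nbhd x \<inter> nbhd w) = {}"
      using nbhds_disjoint_if_edge[OF w(4)] by blast
    then have "card (nbhd x \<inter> nbhd q) + card (nbhd x \<inter> nbhd w)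
        = card ((nbhd x \<inter> nbhd q) \<union> (nbhd x \<inter> nbhd w))"
      using finite_nbhd by (simp add: card_Un_disjoint)
    also have "\<dots> \<le> card (nbhd x)"
      using finite_nbhd by (intro card_mono) auto
    finally show ?thesis .
  qed
  ultimately show ?thesis by linarith
qed

lemma card_ge_20:
  assumes "E \<noteq> {}"
  shows "20 \<le> card V"
proof -
  obtain x z where xz: "(x, z) \<in> E"
    using assms by auto
  have V: "x \<in> V" "z \<in> V" and "x \<noteq> z"
    using xz E_subset irrefl_E by auto
  have deg_x: "8 \<le> card (nbhd x)" and deg_z: "8 \<le> card (nbhd z)"
    using degree_ge_8 V \<open>x \<noteq> z\<close> by metis+
  obtain y where y: "(x, y) \<in> E" "y \<noteq> z"
  proof -
    have "\<not> nbhd x \<subseteq> {z}"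
      using deg_x card_mono[of "{z}" "nbhd x"] by auto
    then show ?thesis using that by blast
  qed
  have "y \<in> V"
    using y E_subset by blast
  then obtain w where w: "w \<in> V" "w \<noteq> y" "(y, w) \<notin> E" "(w, z) \<in> E"
    using escape V y(2) by metis
  have common: "4 \<le> card (nbhd y \<inter> nbhd w)"
    using common_neighbours \<open>y \<in> V\<close> w by metis
  have "nbhd x \<inter> nbhd z = {}" "nbhd x \<inter> (nbhd y \<inter> nbhd w) = {}"
      "nbhd z \<inter> (nbhd y \<inter> nbhd w) = {}"
    using nbhds_disjoint_if_edge xz y(1) w(4) by blast+
  then have "card (nbhd x) + card (nbhd z) + card (nbhd y \<inter> nbhd w)
      = card (nbhd x \<union> nbhd z \<union> (nbhd y \<inter> nbhd w))"
    using finite_nbhd by (simp add: card_Un_disjoint Int_Un_distrib2)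
  also have "\<dots> \<le> card V"
    using finite_V nbhd_subset by (intro card_mono) auto
  finally show ?thesis
    using deg_x deg_z common by linarith
qed

end

lemma representation_graph:
  assumes rep: "representation U f" and "finite U"
  shows "rich_triangle_free_graph U (f {Bb, Cc})"
proof unfold_locales
  show "finite U" by fact
  show "f {Bb, Cc} \<subseteq> U \<times> U"
    using representation_subset[OF rep] .
  show "sym (f {Bb, Cc})"
    using representation_converse[OF rep] by (metis sym_conv_converse_eq)
  show "(u, w) \<notin> f {Bb, Cc}" if "(u, v) \<in> f {Bb, Cc}" "(v, w) \<in> f {Bb, Cc}" for u v w
    using representation_bc_triangle_free[OF rep that] .
  show "4 \<le> card (f {Bb, Cc} `` {u} \<inter> f {Bb, Cc} `` {v})"
    if "u \<in> U" "v \<in> U" "u \<noteq> v" "(u, v) \<notin> f {Bb, Cc}" for u v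
    using representation_common_neighbours[OF rep \<open>finite U\<close> representation_non_edge[OF rep that]] .
  show "\<exists>w\<in>U. w \<noteq> x \<and> (x, w) \<notin> f {Bb, Cc} \<and> (w, y) \<in> f {Bb, Cc}"
    if "x \<in> U" "y \<in> U" "x \<noteq> y" for x y
    using representation_escape[OF rep that] .
qed

theorem mainTheorem12:
  fixes U :: "'u set"
  assumes "finite U" and "card U = 18 \<or> card U = 19"
  shows "\<not> (\<exists>f. representation U f)"
proof
  assume "\<exists>f. representation U f"
  then obtain f where rep: "representation U f" ..
  interpret rich_triangle_free_graph U "f {Bb, Cc}"
    using representation_graph[OF rep \<open>finite U\<close>] .
  have "f {Bb, Cc} \<noteq> {}"
    by (rule representation_nonempty[OF rep]) simp
  then have "20 \<le> card U"
    by (rule card_ge_20)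
  with assms(2) show False
    by auto
qed

end
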